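(* For all integers $\mu_1,\mu_2\ge0$ and $i,j,k,m\ge0$: if $\omega_i+\omega_j+\omega_k-\omega_m=0$, or $\omega_i+\omega_j-\omega_k+\omega_m=0$, or $\omega_i-\omega_j+\omega_k+\omega_m=0$, or $-\omega_i+\omega_j+\omega_k+\omega_m=0$ (with $\omega_n=\omega_n^{(\mu_1,\mu_2)}$), then $\mathsf{C}^{(\mu_1,\mu_2)}_{ijkm}=0$.
   Context: $\omega_n^{(\mu_1,\mu_2)}=2n+1+\mu_1+\mu_2$. $\mathsf{e}_n(x)=\mathsf{N}_n(1-\cos2x)^{\mu_1/2}(1+\cos2x)^{\mu_2/2}P_n^{(\mu_1,\mu_2)}(\cos2x)$ with $P_n^{(\mu_1,\mu_2)}$ Jacobi polynomials and $\mathsf{N}_n=\sqrt{\frac{\omega_n}{2^{\mu_1+\mu_2}}\frac{\Gamma(n+1)\Gamma(n+\mu_1+\mu_2+1)}{\Gamma(n+\mu_1+1)\Gamma(n+\mu_2+1)}}$; $\mathsf{C}^{(\mu_1,\mu_2)}_{ijkm}=\int_0^{\pi/2}\mathsf{e}_i\mathsf{e}_j\mathsf{e}_k\mathsf{e}_m\sin(2x)\,dx$. *)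

theory Defs
  imports "HOL-Analysis.Analysis"
begin

definition omega :: "nat \<Rightarrow> nat \<Rightarrow> nat \<Rightarrow> int" where
  "omega mu1 mu2 n = 2 * int n + 1 + int mu1 + int mu2"

definition jacobiP :: "nat \<Rightarrow> nat \<Rightarrow> nat \<Rightarrow> real \<Rightarrow> real" where
  "jacobiP n a b x = (\<Sum>s\<le>n. real ((n + a) choose (n - s)) * real ((n + b) choose s)
       * ((x - 1) / 2) ^ s * ((x + 1) / 2) ^ (n - s))"

definition normN :: "nat \<Rightarrow> nat \<Rightarrow> nat \<Rightarrow> real" where
  "normN mu1 mu2 n = sqrt (real_of_int (omega mu1 mu2 n) / 2 ^ (mu1 + mu2)
      * (Gamma (real n + 1) * Gamma (real n + real mu1 + real mu2 + 1))
      / (Gamma (real n + real mu1 + 1) * Gamma (real n + real mu2 + 1)))"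

text \<open>Eigenfunctions e_n(x); (1 - cos 2x)^(mu1/2) is written sqrt(1 - cos 2x)^mu1
  (the base is nonnegative).\<close>
definition eigf :: "nat \<Rightarrow> nat \<Rightarrow> nat \<Rightarrow> real \<Rightarrow> real" where
  "eigf mu1 mu2 n x = normN mu1 mu2 n * sqrt (1 - cos (2 * x)) ^ mu1
      * sqrt (1 + cos (2 * x)) ^ mu2 * jacobiP n mu1 mu2 (cos (2 * x))"

definition Ccoef :: "nat \<Rightarrow> nat \<Rightarrow> nat \<Rightarrow> nat \<Rightarrow> nat \<Rightarrow> nat \<Rightarrow> real" where
  "Ccoef mu1 mu2 i j k m = integral {0..pi/2}
     (\<lambda>x. eigf mu1 mu2 i x * eigf mu1 mu2 j x * eigf mu1 mu2 k x * eigf mu1 mu2 m x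
          * sin (2 * x))"

end

theory Submission
  imports Defs "HOL-Computational_Algebra.Polynomial"
begin

text \<open>Substituting y = cos 2x, one has e_n = N_n w^(1/2) P_n(y) with the Jacobi weight
  w(y) = (1 - y)^mu1 (1 + y)^mu2, and sin 2x dx = -dy/2. Hence C_ijkm is a multiple of the
  integral over [-1, 1] of w P_m Q, where Q = w P_i P_j P_k is a polynomial of degree at most
  mu1 + mu2 + i + j + k. Each of the four resonance conditions says that one index, say m,
  equals the sum of the other three plus mu1 + mu2 + 1, so deg Q < m. By Rodrigues' formula
  w P_m is a multiple of the m-th derivative of (1 + y)^(m + mu2) (1 - y)^(m + mu1); integrating
  by parts m times moves all derivatives onto Q, and the boundary terms vanish because that
  polynomial has zeros of order m at y = 1 and y = -1.\<close>

lemma pderiv_sum: "pderiv (\<Sum>i\<in>S. f i) = (\<Sum>i\<in>S. pderiv (f i))"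
  by (induction S rule: infinite_finite_induct) (auto simp: pderiv_add)

lemma higher_pderiv_mult:
  fixes p q :: "'a::{comm_semiring_1,semiring_no_zero_divisors} poly"
  shows "(pderiv ^^ n) (p * q) =
    (\<Sum>i\<le>n. smult (of_nat (n choose i)) ((pderiv ^^ i) p * (pderiv ^^ (n - i)) q))"
proof (induction n)
  case 0
  then show ?case by simp
next
  case (Suc n)
  define F where "F i j = (pderiv ^^ i) p * (pderiv ^^ j) q" for i j
  define A where "A = (\<Sum>i\<le>n. smult (of_nat (n choose i)) (F i (Suc n - i)))"
  define B where "B = (\<Sum>i\<le>n. smult (of_nat (n choose i)) (F (Suc i) (n - i)))"
  have "(pderiv ^^ Suc n) (p * q) = A + B"
    by (simp add: Suc A_def B_def F_def pderiv_sum pderiv_smult pderiv_mult sum.distrib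
        smult_add_right Suc_diff_le algebra_simps)
  also have "A = F 0 (Suc n) + (\<Sum>i\<le>n. smult (of_nat (n choose Suc i)) (F (Suc i) (n - i)))"
  proof -
    have "A = (\<Sum>i\<le>Suc n. smult (of_nat (n choose i)) (F i (Suc n - i)))"
      by (simp add: A_def binomial_eq_0)
    then show ?thesis
      by (simp only: sum.atMost_Suc_shift) simp
  qed
  also have "F 0 (Suc n) + (\<Sum>i\<le>n. smult (of_nat (n choose Suc i)) (F (Suc i) (n - i))) + B
      = (\<Sum>i\<le>Suc n. smult (of_nat (Suc n choose i)) (F i (Suc n - i)))"
    by (simp add: sum.atMost_Suc_shift B_def sum.distrib smult_add_left add_ac del: sum.atMost_Suc)
  finally show ?case
    by (simp add: F_def)
qed

lemma higher_pderiv_linear_power: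
  fixes c d :: "'a::{comm_semiring_1,semiring_no_zero_divisors}"
  shows "(pderiv ^^ k) ([:c, d:] ^ n)
    = smult (d ^ k * of_nat ((n choose k) * fact k)) ([:c, d:] ^ (n - k))"
proof (induction k)
  case 0
  then show ?case by simp
next
  case (Suc k)
  have "(n - k) * (n choose k) = Suc k * (n choose Suc k)"
    by (simp only: binomial_absorb_comp binomial_absorption)
  then have coeff: "(n choose k) * fact k * (n - k) = (n choose Suc k) * fact (Suc k)"
    by (simp add: algebra_simps)
  have "(pderiv ^^ Suc k) ([:c, d:] ^ n)
      = smult (d ^ k * of_nat ((n choose k) * fact k)) (pderiv ([:c, d:] ^ (n - k)))"
    by (simp add: Suc pderiv_smult)
  also have "pderiv ([:c, d:] ^ (n - k)) = smult (of_nat (n - k) * d) ([:c, d:] ^ (n - Suc k))"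
  proof (cases "n - k")
    case (Suc r)
    then have "n - Suc k = r" by simp
    show ?thesis
      unfolding Suc \<open>n - Suc k = r\<close> pderiv_power_Suc
      by (simp add: pderiv_pCons mult.commute)
  qed simp
  also have "smult (d ^ k * of_nat ((n choose k) * fact k))
        (smult (of_nat (n - k) * d) ([:c, d:] ^ (n - Suc k)))
      = smult (d ^ Suc k * of_nat ((n choose Suc k) * fact (Suc k))) ([:c, d:] ^ (n - Suc k))"
    unfolding smult_smult coeff[symmetric] of_nat_mult by (simp add: mult_ac)
  finally show ?case .
qed

lemma pderiv_dvd_power:
  fixes p q :: "'a::{comm_semiring_1,semiring_no_zero_divisors} poly"
  assumes "q ^ Suc n dvd p"
  shows "q ^ n dvd pderiv p"
proof -
  obtain r where "p = q ^ Suc n * r" using assms by (rule dvdE)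
  then have "pderiv p = q ^ n * (q * pderiv r + smult (of_nat (Suc n)) (r * pderiv q))"
    by (simp only: pderiv_mult pderiv_power_Suc) (simp add: algebra_simps)
  then show ?thesis by simp
qed

lemma higher_pderiv_dvd_power:
  fixes p q :: "'a::{comm_semiring_1,semiring_no_zero_divisors} poly"
  assumes "q ^ n dvd p"
  shows "q ^ (n - j) dvd (pderiv ^^ j) p"
proof (induction j)
  case 0
  then show ?case using assms by simp
next
  case (Suc j)
  then show ?case
    by (cases "n - j") (auto simp: pderiv_dvd_power diff_Suc)
qed

lemma poly_higher_pderiv_eq_0:
  fixes p q :: "'a::{comm_semiring_1,semiring_no_zero_divisors} poly"
  assumes "q ^ n dvd p" "j < n" "poly q x = 0"
  shows "poly ((pderiv ^^ j) p) x = 0"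
proof -
  have "q dvd q ^ (n - j)" using assms(2) by simp
  also have "\<dots> dvd (pderiv ^^ j) p" using assms(1) by (rule higher_pderiv_dvd_power)
  finally show ?thesis using assms(3) by auto
qed

lemma higher_pderiv_eq_0:
  fixes p :: "'a::{comm_semiring_1,semiring_no_zero_divisors} poly"
  assumes "degree p < k"
  shows "(pderiv ^^ k) p = 0"
  using assms by (intro poly_eqI) (simp add: coeff_higher_pderiv coeff_eq_0)

text \<open>Under the substitution y = cos 2x this is half the integral of p over [-1, 1].\<close>
definition cos2_integral :: "real poly \<Rightarrow> real" where
  "cos2_integral p = integral {0..pi/2} (\<lambda>x. poly p (cos (2 * x)) * sin (2 * x))"

lemma cos2_integral_diff: "cos2_integral (p - q) = cos2_integral p - cos2_integral q"
proof -
  have integrable: "(\<lambda>x. poly r (cos (2 * x)) * sin (2 * x)) integrable_on {0..pi/2}" for r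
    by (intro integrable_continuous_interval continuous_intros)
  show ?thesis
    unfolding cos2_integral_def
    by (simp add: left_diff_distrib integral_diff[OF integrable integrable])
qed

lemma cos2_integral_smult: "cos2_integral (smult c p) = c * cos2_integral p"
  unfolding cos2_integral_def by (simp add: mult.assoc)

lemma cos2_integral_pderiv: "cos2_integral (pderiv p) = (poly p 1 - poly p (-1)) / 2"
proof -
  have "((\<lambda>x. - poly p (cos (2 * x)) / 2)
      has_real_derivative poly (pderiv p) (cos (2 * x)) * sin (2 * x)) (at x within {0..pi/2})" for x
    by (auto intro!: derivative_eq_intros DERIV_chain2[OF poly_DERIV])
  then have "((\<lambda>x. poly (pderiv p) (cos (2 * x)) * sin (2 * x)) has_integral
      (- poly p (cos (2 * (pi/2))) / 2 - - poly p (cos (2 * 0)) / 2)) {0..pi/2}"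
    by (intro fundamental_theorem_of_calculus)
      (auto simp: has_real_derivative_iff_has_vector_derivative)
  then show ?thesis
    unfolding cos2_integral_def by (simp add: integral_unique field_simps)
qed

lemma cos2_integral_higher_pderiv_mult_eq_0:
  assumes "\<And>j. j < k \<Longrightarrow> poly ((pderiv ^^ j) G) 1 = 0 \<and> poly ((pderiv ^^ j) G) (-1) = 0"
    and "(pderiv ^^ k) Q = 0"
  shows "cos2_integral ((pderiv ^^ k) G * Q) = 0"
  using assms
proof (induction k arbitrary: Q)
  case 0
  then show ?case by (simp add: cos2_integral_def)
next
  case (Suc k)
  define D where "D = (pderiv ^^ k) G"
  have "(pderiv ^^ Suc k) G * Q = pderiv (D * Q) - D * pderiv Q"
    by (simp add: D_def pderiv_mult algebra_simps)
  moreover have "cos2_integral (pderiv (D * Q)) = 0"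
    using Suc.prems(1)[of k] by (simp add: cos2_integral_pderiv D_def)
  moreover have "cos2_integral (D * pderiv Q) = 0"
    unfolding D_def using Suc.prems
    by (intro Suc.IH) (auto simp: funpow_Suc_right simp del: funpow.simps)
  ultimately show ?case by (simp add: cos2_integral_diff)
qed

definition jacobi_poly :: "nat \<Rightarrow> nat \<Rightarrow> nat \<Rightarrow> real poly" where
  "jacobi_poly n a b = (\<Sum>s\<le>n. smult (real ((n + a) choose (n - s)) * real ((n + b) choose s))
       ([:-1/2, 1/2:] ^ s * [:1/2, 1/2:] ^ (n - s)))"

lemma poly_jacobi_poly: "poly (jacobi_poly n a b) x = jacobiP n a b x"
  unfolding jacobi_poly_def jacobiP_def by (simp add: poly_sum field_simps)

lemma degree_jacobi_poly: "degree (jacobi_poly n a b) \<le> n"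
  unfolding jacobi_poly_def
proof (intro degree_sum_le)
  fix s assume "s \<in> {..n}"
  have "degree ([:-1/2, 1/2:] ^ s * [:1/2, 1/2:] ^ (n - s) :: real poly) \<le> s + (n - s)"
    by (intro order.trans[OF degree_mult_le] add_mono order.trans[OF degree_power_le]) auto
  with \<open>s \<in> {..n}\<close> have "degree ([:-1/2, 1/2:] ^ s * [:1/2, 1/2:] ^ (n - s) :: real poly) \<le> n"
    by simp
  then show "degree (smult (real ((n + a) choose (n - s)) * real ((n + b) choose s))
      ([:-1/2, 1/2:] ^ s * [:1/2, 1/2:] ^ (n - s) :: real poly)) \<le> n"
    using degree_smult_le order_trans by blast
qed simp

definition jacobi_weight :: "nat \<Rightarrow> nat \<Rightarrow> real poly" where
  "jacobi_weight a b = [:1, -1:] ^ a * [:1, 1:] ^ b"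

lemma degree_jacobi_weight: "degree (jacobi_weight a b) \<le> a + b"
  unfolding jacobi_weight_def
  by (intro order.trans[OF degree_mult_le] add_mono order.trans[OF degree_power_le]) auto

lemma jacobi_rodrigues_term:
  fixes y :: real
  assumes "s \<le> n"
  shows "real (n choose s) * (real (((n + b) choose s) * fact s) * (1 + y) ^ (n + b - s))
      * ((-1) ^ (n - s) * real (((n + a) choose (n - s)) * fact (n - s)) * (1 - y) ^ (n + a - (n - s)))
    = (-2) ^ n * fact n * ((1 - y) ^ a * (1 + y) ^ b * (real ((n + a) choose (n - s))
      * real ((n + b) choose s) * ((y - 1) / 2) ^ s * ((y + 1) / 2) ^ (n - s)))"
proof -
  obtain t where n: "n = s + t" using assms by (auto simp: le_iff_add)
  have fact: "real (n choose s) * fact s * fact t = fact n"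
    using arg_cong[OF binomial_fact_lemma[OF assms], of real] unfolding n by (simp add: mult_ac)
  have "(-2) ^ n * (((y - 1) / 2) ^ s * ((y + 1) / 2) ^ t) = (1 - y) ^ s * ((-1) ^ t * (1 + y) ^ t)"
    unfolding n power_add by (simp add: power_mult_distrib[symmetric] field_simps)
  then show ?thesis
    unfolding n by (simp add: fact[unfolded n, symmetric] power_add algebra_simps)
qed

lemma jacobi_rodrigues:
  "(pderiv ^^ n) ([:1, 1:] ^ (n + b) * [:1, -1:] ^ (n + a))
     = smult ((-2) ^ n * fact n) (jacobi_weight a b * jacobi_poly n a b)"
proof (rule poly_eq_poly_eq_iff[THEN iffD1], rule ext)
  fix y :: real
  have "poly ((pderiv ^^ n) ([:1, 1:] ^ (n + b) * [:1, -1:] ^ (n + a))) y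
      = (\<Sum>s\<le>n. real (n choose s) * (real (((n + b) choose s) * fact s) * (1 + y) ^ (n + b - s))
          * ((-1) ^ (n - s) * real (((n + a) choose (n - s)) * fact (n - s)) * (1 - y) ^ (n + a - (n - s))))"
    by (simp add: higher_pderiv_mult higher_pderiv_linear_power poly_sum mult_ac)
  also have "\<dots> = (\<Sum>s\<le>n. (-2) ^ n * fact n * ((1 - y) ^ a * (1 + y) ^ b * (real ((n + a) choose (n - s))
      * real ((n + b) choose s) * ((y - 1) / 2) ^ s * ((y + 1) / 2) ^ (n - s))))"
    by (intro sum.cong refl jacobi_rodrigues_term) simp
  also have "\<dots> = poly (smult ((-2) ^ n * fact n) (jacobi_weight a b * jacobi_poly n a b)) y"
    by (simp add: jacobi_weight_def poly_jacobi_poly jacobiP_def sum_distrib_left mult_ac)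
  finally show "poly ((pderiv ^^ n) ([:1, 1:] ^ (n + b) * [:1, -1:] ^ (n + a))) y
      = poly (smult ((-2) ^ n * fact n) (jacobi_weight a b * jacobi_poly n a b)) y" .
qed

lemma cos2_integral_jacobi_orthogonal:
  assumes "degree Q < n"
  shows "cos2_integral (jacobi_weight a b * jacobi_poly n a b * Q) = 0"
proof -
  define G :: "real poly" where "G = [:1, 1:] ^ (n + b) * [:1, -1:] ^ (n + a)"
  have "[:1, 1:] ^ n dvd G" "[:1, -1:] ^ n dvd G"
    unfolding G_def power_add by auto
  then have "poly ((pderiv ^^ j) G) 1 = 0 \<and> poly ((pderiv ^^ j) G) (-1) = 0" if "j < n" for j
    using that by (auto intro: poly_higher_pderiv_eq_0)
  then have "cos2_integral ((pderiv ^^ n) G * Q) = 0"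
    using higher_pderiv_eq_0[OF assms] by (rule cos2_integral_higher_pderiv_mult_eq_0)
  then show ?thesis
    by (simp add: G_def jacobi_rodrigues cos2_integral_smult mult.assoc)
qed

lemma eigf_mult_eigf:
  "eigf a b n x * eigf a b n' x = normN a b n * normN a b n'
     * poly (jacobi_weight a b * jacobi_poly n a b * jacobi_poly n' a b) (cos (2 * x))"
proof -
  define c where "c = cos (2 * x)"
  have "-1 \<le> c" "c \<le> 1" unfolding c_def by auto
  then have "sqrt (1 - c) ^ a * sqrt (1 - c) ^ a = (1 - c) ^ a"
    and "sqrt (1 + c) ^ b * sqrt (1 + c) ^ b = (1 + c) ^ b"
    by (simp_all add: power_mult_distrib[symmetric])
  then show ?thesis
    unfolding eigf_def c_def[symmetric] poly_jacobi_poly[symmetric]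
    by (simp add: jacobi_weight_def algebra_simps)
qed

lemma Ccoef_eq_0_if_gt:
  assumes "i + j + k + a + b < m"
  shows "Ccoef a b i j k m = 0"
proof -
  define Q where "Q = jacobi_weight a b * jacobi_poly i a b * jacobi_poly j a b * jacobi_poly k a b"
  have "degree Q \<le> a + b + i + j + k"
    unfolding Q_def
    by (intro order.trans[OF degree_mult_le] add_mono degree_jacobi_weight degree_jacobi_poly)
  with assms have "degree Q < m" by simp
  have "Ccoef a b i j k m = normN a b i * normN a b j * normN a b k * normN a b m
      * cos2_integral (jacobi_weight a b * jacobi_poly m a b * Q)"
    unfolding Ccoef_def cos2_integral_def Q_def integral_mult_right[symmetric]
    by (intro integral_cong)
      (simp add: eigf_mult_eigf[of a b i x j for x] eigf_mult_eigf[of a b k x m for x] ac_simps)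
  also have "\<dots> = 0"
    using cos2_integral_jacobi_orthogonal[OF \<open>degree Q < m\<close>] by simp
  finally show ?thesis .
qed

theorem lemma5p3:
  fixes mu1 mu2 i j k m :: nat
  assumes "omega mu1 mu2 i + omega mu1 mu2 j + omega mu1 mu2 k - omega mu1 mu2 m = 0
         \<or> omega mu1 mu2 i + omega mu1 mu2 j - omega mu1 mu2 k + omega mu1 mu2 m = 0
         \<or> omega mu1 mu2 i - omega mu1 mu2 j + omega mu1 mu2 k + omega mu1 mu2 m = 0
         \<or> - omega mu1 mu2 i + omega mu1 mu2 j + omega mu1 mu2 k + omega mu1 mu2 m = 0"
  shows "Ccoef mu1 mu2 i j k m = 0"
proof -
  from assms consider "i + j + k + mu1 + mu2 < m" | "i + j + m + mu1 + mu2 < k"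
    | "i + k + m + mu1 + mu2 < j" | "j + k + m + mu1 + mu2 < i"
    unfolding omega_def by linarith
  then show ?thesis
  proof cases
    case 1
    then show ?thesis by (rule Ccoef_eq_0_if_gt)
  next
    case 2
    then show ?thesis using Ccoef_eq_0_if_gt[of i j m mu1 mu2 k] by (simp add: Ccoef_def mult_ac)
  next
    case 3
    then show ?thesis using Ccoef_eq_0_if_gt[of i k m mu1 mu2 j] by (simp add: Ccoef_def mult_ac)
  next
    case 4
    then show ?thesis using Ccoef_eq_0_if_gt[of j k m mu1 mu2 i] by (simp add: Ccoef_def mult_ac)
  qed
qed

end
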